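(* Let $\Omega$ be a finite set, $\phi:\mathbb{R}\to\mathbb{R}_{+}$ increasing, $c\in\mathbb{R}^{|\Omega|}_{+}$, $\sigma\ge0$, and $H_{\mathbb{B}}=\{(x,z)\in\{0,1\}^{|\Omega|}\times\mathbb{R}_{+}:\phi(\sigma+\sum_{i\in\Omega}c_ix_i)\le z\}$. Define $f_\sigma(\mathcal{S})=\phi(\sigma+\sum_{i\in\mathcal{S}}c_i)$ and $g_\sigma(\mathcal{S})=f_\sigma(\mathcal{S})-\phi(\sigma)$. Then for any $\gamma\in\Gamma(g_\sigma)$ the inequality $$-|\Omega|D[f_\sigma]+\sum_{s\in\Omega}\gamma_sx_s\le z-\phi(\sigma)$$ is valid for $\mathrm{conv}(H_{\mathbb{B}})$.
   Context: For a set function $h$ and permutation $\pi$ of $\Omega$, $\mathcal{S}^\pi_0=\emptyset$, $\mathcal{S}^\pi_k=\{\pi_1,\dots,\pi_k\}$; $\Gamma(h)=\{\gamma\in\mathbb{R}^{|\Omega|}:\exists$ permutation $\pi$ with $\gamma_{\pi_i}=h(\mathcal{S}^\pi_i)-h(\mathcal{S}^\pi_{i-1})$ for all $i\}$. $D[h]=\max\{h(\mathcal{A}\cup\mathcal{B}\cup\{s\})-h(\mathcal{A}\cup\mathcal{B})-h(\mathcal{A}\cup\{s\})+h(\mathcal{A}):\mathcal{A},\mathcal{B}\subseteq\Omega,s\in\Omega,|\mathcal{A}|\le|\Omega|-1\}$. *)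

theory Defs
  imports "HOL-Analysis.Analysis"
begin

text \<open>Ground set Omega is modelled as the finite type 'n (Omega = UNIV).
  A permutation pi of Omega is a distinct list enumerating UNIV; S^pi_k = set (take k pi).\<close>

definition Gamma :: "('n::finite set \<Rightarrow> real) \<Rightarrow> (real^'n) set" where
  "Gamma h = {\<gamma>. \<exists>\<pi>::'n list. distinct \<pi> \<and> set \<pi> = UNIV \<and>
      (\<forall>i < length \<pi>. \<gamma> $ (\<pi> ! i) = h (set (take (Suc i) \<pi>)) - h (set (take i \<pi>)))}"

definition Dmax :: "('n::finite set \<Rightarrow> real) \<Rightarrow> real" where
  "Dmax h = Max {h (A \<union> B \<union> {s}) - h (A \<union> B) - h (A \<union> {s}) + h A |
      A B s. card A \<le> CARD('n) - 1}"

definition HB :: "(real \<Rightarrow> real) \<Rightarrow> real^('n::finite) \<Rightarrow> real \<Rightarrow> ((real^'n) \<times> real) set" where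
  "HB \<phi> c \<sigma> = {(x, z). (\<forall>i. x $ i \<in> {0, 1}) \<and> z \<ge> 0 \<and>
      \<phi> (\<sigma> + (\<Sum>i\<in>UNIV. c $ i * x $ i)) \<le> z}"

definition f_sig :: "(real \<Rightarrow> real) \<Rightarrow> real^('n::finite) \<Rightarrow> real \<Rightarrow> 'n set \<Rightarrow> real" where
  "f_sig \<phi> c \<sigma> S = \<phi> (\<sigma> + (\<Sum>i\<in>S. c $ i))"

definition g_sig :: "(real \<Rightarrow> real) \<Rightarrow> real^('n::finite) \<Rightarrow> real \<Rightarrow> 'n set \<Rightarrow> real" where
  "g_sig \<phi> c \<sigma> S = f_sig \<phi> c \<sigma> S - \<phi> \<sigma>"

end

theory Submission
  imports Defs
begin

text \<open>Let \<open>\<gamma>\<close> be the vector of marginal values of \<open>f\<close> along a permutation \<open>\<pi>\<close>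
  (subtracting the constant \<open>\<phi>(\<sigma>)\<close> does not change marginal values). For a point \<open>(x, z)\<close>
  of \<open>H_B\<close> with support \<open>T\<close>, walk along \<open>\<pi>\<close>: the marginal value of an element of \<open>T\<close>
  on top of the prefix \<open>S\<close> before it exceeds its marginal value on top of the smaller set
  \<open>T \<inter> S\<close> by at most \<open>D[f]\<close>. Telescoping over the at most \<open>|\<Omega>|\<close> steps gives
  \<open>\<Sum>s\<in>T. \<gamma>_s \<le> f(T) - f({}) + |\<Omega>| D[f]\<close>, and \<open>f(T) \<le> z\<close>; the inequality is linear,
  so it passes to the convex hull.\<close>

lemma Dmax_ge:
  fixes h :: "'n::finite set \<Rightarrow> real"
  assumes "card A \<le> CARD('n) - 1"
  shows "h (A \<union> B \<union> {s}) - h (A \<union> B) - h (A \<union> {s}) + h A \<le> Dmax h"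
proof -
  let ?F = "\<lambda>(A, B, s). h (A \<union> B \<union> {s}) - h (A \<union> B) - h (A \<union> {s}) + h A"
  have "finite {h (A \<union> B \<union> {s}) - h (A \<union> B) - h (A \<union> {s}) + h A | A B s. card A \<le> CARD('n) - 1}"
    by (rule finite_subset[of _ "range ?F"]) (auto intro: range_eqI[where x = "(_, _, _)"])
  then show ?thesis
    unfolding Dmax_def by (rule Max_ge) (use assms in blast)
qed

lemma Dmax_nonneg: "0 \<le> Dmax (h :: 'n::finite set \<Rightarrow> real)"
  using Dmax_ge[of "{}" h "{}"] by simp

lemma marginal_le_marginal_subset_plus_Dmax:
  fixes h :: "'n::finite set \<Rightarrow> real"
  assumes "A \<subseteq> S" and "card S < CARD('n)"
  shows "h (insert s S) - h S \<le> h (insert s A) - h A + Dmax h"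
proof -
  have "card A \<le> CARD('n) - 1"
    using card_mono[OF finite assms(1)] assms(2) by linarith
  from Dmax_ge[OF this, of h S s] show ?thesis
    using assms(1) by (simp add: Un_absorb1)
qed

lemma Gamma_diff_const: "Gamma (\<lambda>S. h S - a) = Gamma h"
  unfolding Gamma_def by simp

lemma sum_prefix_Gamma_le:
  fixes h :: "'n::finite set \<Rightarrow> real" and \<gamma> :: "real^'n"
  assumes distinct: "distinct \<pi>" and enum: "set \<pi> = UNIV"
    and marginal: "\<forall>i < length \<pi>. \<gamma> $ (\<pi> ! i) = h (set (take (Suc i) \<pi>)) - h (set (take i \<pi>))"
    and "k \<le> length \<pi>"
  shows "(\<Sum>s\<in>T \<inter> set (take k \<pi>). \<gamma> $ s) \<le> h (T \<inter> set (take k \<pi>)) - h {} + real k * Dmax h"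
  using \<open>k \<le> length \<pi>\<close>
proof (induction k)
  case 0
  then show ?case by simp
next
  case (Suc k)
  define s where "s = \<pi> ! k"
  define S where "S = set (take k \<pi>)"
  have k: "k < length \<pi>" using Suc.prems by simp
  have prefix: "set (take (Suc k) \<pi>) = insert s S"
    using k by (simp add: take_Suc_conv_app_nth s_def S_def)
  have "s \<notin> S"
    using distinct k unfolding s_def S_def by (auto simp: in_set_conv_nth nth_eq_iff_index_eq)
  have IH: "(\<Sum>s\<in>T \<inter> S. \<gamma> $ s) \<le> h (T \<inter> S) - h {} + real k * Dmax h"
    using Suc unfolding S_def by simp
  show ?case
  proof (cases "s \<in> T")
    case True
    have "card S < CARD('n)"
      using distinct k distinct_card[OF distinct] enum unfolding S_def by (simp add: distinct_card)
    then have "\<gamma> $ s \<le> h (insert s (T \<inter> S)) - h (T \<inter> S) + Dmax h"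
      using marginal_le_marginal_subset_plus_Dmax[of "T \<inter> S" S h s] marginal k prefix
      unfolding s_def S_def by auto
    moreover have "T \<inter> insert s S = insert s (T \<inter> S)" using True by auto
    ultimately show ?thesis
      using IH prefix \<open>s \<notin> S\<close> by (simp add: algebra_simps)
  next
    case False
    then have "T \<inter> insert s S = T \<inter> S" by auto
    then show ?thesis
      using IH prefix Dmax_nonneg[of h] by (simp add: algebra_simps)
  qed
qed

lemma sum_Gamma_le:
  fixes h :: "'n::finite set \<Rightarrow> real"
  assumes "\<gamma> \<in> Gamma h"
  shows "(\<Sum>s\<in>T. \<gamma> $ s) \<le> h T - h {} + real CARD('n) * Dmax h"
proof -
  obtain \<pi> :: "'n list" where "distinct \<pi>" "set \<pi> = UNIV"
    and "\<forall>i < length \<pi>. \<gamma> $ (\<pi> ! i) = h (set (take (Suc i) \<pi>)) - h (set (take i \<pi>))"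
    using assms unfolding Gamma_def by blast
  with sum_prefix_Gamma_le[of \<pi> \<gamma> h "length \<pi>" T] show ?thesis
    by (metis Int_UNIV_right distinct_card order_refl take_all)
qed

lemma sum_mult_zero_one:
  fixes a x :: "real^'n::finite"
  assumes "\<forall>i. x $ i \<in> {0, 1}"
  shows "(\<Sum>i\<in>UNIV. a $ i * x $ i) = (\<Sum>i\<in>{i. x $ i = 1}. a $ i)"
proof -
  have "(\<Sum>i\<in>UNIV. a $ i * x $ i) = (\<Sum>i\<in>UNIV. if x $ i = 1 then a $ i else 0)"
    using assms by (intro sum.cong) auto
  then show ?thesis by (simp add: sum.If_cases)
qed

theorem mainTheorem9:
  fixes \<phi> :: "real \<Rightarrow> real" and c :: "real^('n::finite)" and \<sigma> :: real and \<gamma> :: "real^'n"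
  assumes "mono \<phi>" and "\<And>t. \<phi> t \<ge> 0"
    and "\<And>i. c $ i \<ge> 0" and "\<sigma> \<ge> 0"
    and "\<gamma> \<in> Gamma (g_sig \<phi> c \<sigma>)"
  shows "\<forall>(x, z) \<in> convex hull (HB \<phi> c \<sigma>).
     - real CARD('n) * Dmax (f_sig \<phi> c \<sigma>) + (\<Sum>s\<in>UNIV. \<gamma> $ s * x $ s) \<le> z - \<phi> \<sigma>"
proof -
  let ?f = "f_sig \<phi> c \<sigma>"
  let ?halfspace = "{p. (\<gamma>, -1 :: real) \<bullet> p \<le> real CARD('n) * Dmax ?f - \<phi> \<sigma>}"
  have \<gamma>: "\<gamma> \<in> Gamma ?f"
    using assms(5) Gamma_diff_const[of ?f "\<phi> \<sigma>"] by (simp add: g_sig_def[abs_def])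
  have "(\<gamma>, -1 :: real) \<bullet> (x, z) \<le> real CARD('n) * Dmax ?f - \<phi> \<sigma>"
    if "(x, z) \<in> HB \<phi> c \<sigma>" for x z
  proof -
    from that have "\<forall>i. x $ i \<in> {0, 1}" and "?f {i. x $ i = 1} \<le> z"
      unfolding HB_def f_sig_def by (auto simp: sum_mult_zero_one)
    with sum_Gamma_le[OF \<gamma>, of "{i. x $ i = 1}"] show ?thesis
      by (simp add: inner_vec_def sum_mult_zero_one f_sig_def)
  qed
  then have "HB \<phi> c \<sigma> \<subseteq> ?halfspace"
    by auto
  then have "convex hull (HB \<phi> c \<sigma>) \<subseteq> ?halfspace"
    by (rule hull_minimal) (rule convex_halfspace_le)
  then show ?thesis
    by (auto simp: inner_vec_def)
qed

end
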